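(* Assume (A1) and (A4). Consider Algorithm 2 with parameter choice (P1), any stage $s$ and any inner iteration $k$. Then, with expectation taken over the samples $i_k,j_k$ (conditionally on the past), $$\mathbb E\|x^{k+1}-x^*\|_{G_k}^2\le\mathbb E\|x^k-x^*\|_{G_k}^2-2\eta_s\mathbb E\big(F(x^{k+1})-F(x^* )\big)-2\eta_s\mathbb E\langle\nabla\hat F_{i_k}(x^k)-\nabla F(x^k),x^{k+1}-x^*\rangle+2\eta_s\mathbb E\langle A^T\lambda^{k+1},x^*-x^{k+1}\rangle.$$
   Context: Standing setup. Let $n,m,p,q,r,l\ge1$. For $j\in\{1,\dots,m\}$ let $g_j:\mathbb R^q\to\mathbb R^r$ be continuously differentiable with Jacobian $\partial g_j(x)\in\mathbb R^{r\times q}$; for $i\in\{1,\dots,n\}$ let $f_i:\mathbb R^r\to\mathbb R$ be continuously differentiable. Set $g(x)=\frac1m\sum_{j=1}^m g_j(x)$, $F_i(x)=f_i(g(x))$, $F(x)=\frac1n\sum_{i=1}^nF_i(x)$. Let $R:\mathbb R^l\to\mathbb R$ be closed convex, $A\in\mathbb R^{p\times q}$, $B\in\mathbb R^{p\times l}$; the problem is $\min_{x,\omega}F(x)+R(\omega)$ s.t. $Ax+B\omega=0$, with optimal primal–dual solution $(x^*,\omega^*,\lambda^* )$. $\|\cdot\|$ is the Euclidean norm; for positive definite $H$, $\|x\|_H^2=x^THx$. Assumptions. (A1) Each $F_i$ is convex, $R$ is convex, an optimal primal–dual solution exists, and all $x$-points arising lie in a bounded set. (A4) There is $L_F>0$ with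 $\|(\partial g_j(x))^T\nabla f_i(g(x))-(\partial g_j(y))^T\nabla f_i(g(y))\|\le L_F\|x-y\|$ for all $i,j,x,y$. Algorithm 2 (inputs: integers $S,K\ge1$, $\rho>0$, stepsizes $\eta_s>0$, matrices $G_k$ per stage as below; initial $\tilde x^0=\hat x^0$, $\hat\omega^0$, $\hat\lambda^0$, $\hat G^0=I$). For $s=1,\dots,S$: set $\tilde x=\tilde x^{s-1}$, $x^0=\hat x^{s-1}$, $\omega^0=\hat\omega^{s-1}$, $\lambda^0=\hat\lambda^{s-1}$, $G_0=\hat G^{s-1}$; compute $g(\tilde x)$, $\nabla F(\tilde x)$. For $k=0,\dots,K-1$: (a) $\omega^{k+1}\in\arg\min_\omega R(\omega)+\langle\lambda^k,B\omega\rangle+\frac\rho2\|Ax^k+B\omega\|^2$; (b) compute $g(x^k)$ exactly; (c) draw $i_k$ uniform on $\{1,\dots,n\}$ and $j_k$ uniform on $\{1,\dots,m\}$, independently, and set $\nabla\hat F_{i_k}(x^k)=(\partial g_{j_k}(x^k))^T\nabla f_{i_k}(g(x^k))-(\partial g_{j_k}(\tilde x))^T\nabla f_{i_k}(g(\tilde x))+\nabla F(\tilde x)$; (d) $x^{k+1}=\arg\min_x\langle\nabla\hat F_{i_k}(x^k),x-x^k\rangle+\langle\lambda^k,Ax\rangle+\frac\rho2\|Ax+B\omega^{k+1}\|^2+\frac1{2\eta_s}\|x-x^k\|_{G_k}^2$; (e) $\lambda^{k+1}=\lambda^k+\rho(Ax^{k+1}+B\omega^{k+1})$. End of stage $s$: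 $\tilde x^s=\frac1K\sum_{k=1}^Kx^k$, $\tilde\omega^s=\frac1K\sum_{k=1}^K\omega^k$, $\hat x^s=x^K$, $\hat\omega^s=\omega^K$, $\hat\lambda^s=\lambda^K$, $\hat G^s=G_K$. Parameter choice (P1): $\eta_s=\frac1{(s+1)L_F}$, and in stage $s$ the matrices $G_0,\dots,G_K$ are scalar multiples of the identity with $\frac1sI=G_0\succeq G_1\succeq\dots\succeq G_{K-1}=G_K=\frac1{s+1}I$. *)

theory Defs
  imports "HOL-Analysis.Analysis"
begin

definition gavg :: "nat \<Rightarrow> (nat \<Rightarrow> real^'q \<Rightarrow> real^'r) \<Rightarrow> real^'q \<Rightarrow> real^'r" where
  "gavg m g x = (1 / real m) *\<^sub>R (\<Sum>j<m. g j x)"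

definition Fobj :: "nat \<Rightarrow> nat \<Rightarrow> (nat \<Rightarrow> real^'r \<Rightarrow> real) \<Rightarrow> (nat \<Rightarrow> real^'q \<Rightarrow> real^'r)
    \<Rightarrow> real^'q \<Rightarrow> real" where
  "Fobj n m f g x = (1 / real n) * (\<Sum>i<n. f i (gavg m g x))"

definition wnorm2 :: "real^'q^'q \<Rightarrow> real^'q \<Rightarrow> real" where
  "wnorm2 H x = x \<bullet> (H *v x)"

text \<open>Expectation over (i_k, j_k) uniform on {0..<n} x {0..<m}, independent.\<close>
definition Esamp :: "nat \<Rightarrow> nat \<Rightarrow> (nat \<Rightarrow> nat \<Rightarrow> real) \<Rightarrow> real" where
  "Esamp n m X = (\<Sum>i<n. \<Sum>j<m. X i j) / (real n * real m)"

text \<open>Optimal primal-dual solution: saddle point of the Lagrangian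
  L(x,w,lam) = F(x) + R(w) + <lam, Ax + Bw>.\<close>
definition primal_dual_opt ::
  "(real^'q \<Rightarrow> real) \<Rightarrow> (real^'l \<Rightarrow> real) \<Rightarrow> real^'q^'p \<Rightarrow> real^'l^'p
    \<Rightarrow> real^'q \<Rightarrow> real^'l \<Rightarrow> real^'p \<Rightarrow> bool" where
  "primal_dual_opt F R A B xs ws ls \<longleftrightarrow>
     (\<forall>x w lam. F xs + R ws + lam \<bullet> (A *v xs + B *v ws)
                  \<le> F xs + R ws + ls \<bullet> (A *v xs + B *v ws)
               \<and> F xs + R ws + ls \<bullet> (A *v xs + B *v ws)
                  \<le> F x + R w + ls \<bullet> (A *v x + B *v w))"

end

theory Submission
  imports Defs
begin

text \<open>For a fixed sample (i, j) the x-update minimises a differentiable model, so its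
  gradient vanishes at x^{k+1}: with c = cs k and v the variance-reduced gradient estimate,
  v + A^T lambda^{k+1} + (c / eta) (x^{k+1} - x^k) = 0. Pairing this with x^{k+1} - x^* and
  the three-point identity for squared distances yields the distance decrease. The term
  grad F(x^k) . (x^{k+1} - x^*) is bounded below by F(x^{k+1}) - F(x^*) - (LF/2) |x^{k+1} - x^k|^2,
  by the descent lemma for the LF-Lipschitz gradient together with the gradient inequality of
  convexity; the leftover quadratic term is absorbed because eta LF = cs K <= cs k. Averaging
  the per-sample inequality over (i, j) gives the claim.\<close>

lemma Esamp_add: "Esamp n m (\<lambda>i j. X i j + Y i j) = Esamp n m X + Esamp n m Y"
  by (simp add: Esamp_def sum.distrib add_divide_distrib)

lemma Esamp_diff: "Esamp n m (\<lambda>i j. X i j - Y i j) = Esamp n m X - Esamp n m Y"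
  by (simp add: Esamp_def sum_subtractf diff_divide_distrib)

lemma Esamp_cmult: "Esamp n m (\<lambda>i j. c * X i j) = c * Esamp n m X"
  by (simp add: Esamp_def sum_distrib_left)

lemma Esamp_mono:
  assumes "\<And>i j. i < n \<Longrightarrow> j < m \<Longrightarrow> X i j \<le> Y i j"
  shows "Esamp n m X \<le> Esamp n m Y"
  unfolding Esamp_def by (intro divide_right_mono sum_mono) (auto intro: assms)

lemma wnorm2_scaleR_mat1: "wnorm2 (c *\<^sub>R mat 1) y = c * (norm y)\<^sup>2"
  unfolding wnorm2_def power2_norm_eq_inner
  by (metis inner_scaleR_right matrix_vector_mul_lid scaleR_matrix_vector_assoc)

lemma transpose_matrix_vector_inner:
  "(transpose (M :: real^'a^'b) *v u) \<bullet> h = u \<bullet> (M *v h)"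
  by (metis dot_lmul_matrix transpose_matrix_vector)

lemma convex_on_sum_fun:
  assumes "finite I" and "convex S" and "\<And>i. i \<in> I \<Longrightarrow> convex_on S (f i)"
  shows "convex_on S (\<lambda>x. \<Sum>i\<in>I. f i x)"
  using assms
proof (induction I rule: finite_induct)
  case empty
  then show ?case by (simp add: convex_on_const)
next
  case (insert i I)
  then show ?case by (simp add: convex_on_add)
qed

lemma gradient_zero_at_minimum:
  fixes \<phi> :: "'a::real_inner \<Rightarrow> real"
  assumes "(\<phi> has_derivative (\<lambda>h. G \<bullet> h)) (at x)" and "\<And>z. \<phi> x \<le> \<phi> z"
  shows "G = 0"
proof -
  have "(\<lambda>h. G \<bullet> h) = (\<lambda>h. 0)"
    using differential_zero_maxmin[of x UNIV] assms by blast
  then show ?thesis by (metis inner_eq_zero_iff)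
qed

lemma convex_on_gradient_ineq:
  fixes F :: "'a::real_inner \<Rightarrow> real"
  assumes cvx: "convex_on UNIV F"
    and deriv: "\<And>x. (F has_derivative (\<lambda>h. gF x \<bullet> h)) (at x)"
  shows "F x + gF x \<bullet> (y - x) \<le> F y"
proof -
  define \<psi> where "\<psi> = (\<lambda>t::real. F (x + t *\<^sub>R (y - x)))"
  have "convex_on UNIV \<psi>"
  proof (rule convex_onI)
    fix t a b :: real assume t: "t > 0" "t < 1"
    have "x + ((1 - t) *\<^sub>R a + t *\<^sub>R b) *\<^sub>R (y - x)
        = (1 - t) *\<^sub>R (x + a *\<^sub>R (y - x)) + t *\<^sub>R (x + b *\<^sub>R (y - x))"
      by (simp add: algebra_simps)
    then show "\<psi> ((1 - t) *\<^sub>R a + t *\<^sub>R b) \<le> (1 - t) * \<psi> a + t * \<psi> b"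
      unfolding \<psi>_def using convex_onD[OF cvx, of t] t by simp
  qed simp
  moreover have "(\<psi> has_field_derivative (gF x \<bullet> (y - x))) (at 0)"
    unfolding \<psi>_def has_field_derivative_def
    by (rule has_derivative_eq_rhs, rule has_derivative_compose[OF _ deriv])
       (auto intro!: derivative_eq_intros)
  ultimately have "(gF x \<bullet> (y - x)) * (1 - 0) \<le> \<psi> 1 - \<psi> 0"
    by (intro convex_on_imp_above_tangent) auto
  then show ?thesis unfolding \<psi>_def by simp
qed

lemma lipschitz_gradient_descent:
  fixes F :: "'a::real_inner \<Rightarrow> real"
  assumes deriv: "\<And>x. (F has_derivative (\<lambda>h. gF x \<bullet> h)) (at x)"
    and lip: "\<And>x y. norm (gF x - gF y) \<le> L * norm (x - y)"
  shows "F y \<le> F x + gF x \<bullet> (y - x) + L / 2 * (norm (y - x))\<^sup>2"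
proof -
  define d where "d = y - x"
  define \<phi> where "\<phi> = (\<lambda>t. F (x + t *\<^sub>R d) - t * (gF x \<bullet> d) - L / 2 * t\<^sup>2 * (norm d)\<^sup>2)"
  define \<phi>' where "\<phi>' = (\<lambda>t. gF (x + t *\<^sub>R d) \<bullet> d - gF x \<bullet> d - L * t * (norm d)\<^sup>2)"
  have der: "(\<phi> has_real_derivative \<phi>' t) (at t)" for t
  proof -
    have "((\<lambda>t. F (x + t *\<^sub>R d)) has_real_derivative (gF (x + t *\<^sub>R d) \<bullet> d)) (at t)"
      unfolding has_field_derivative_def
      by (rule has_derivative_eq_rhs, rule has_derivative_compose[OF _ deriv])
         (auto intro!: derivative_eq_intros)
    then show ?thesis unfolding \<phi>_def \<phi>'_def
      by (auto intro!: derivative_eq_intros simp: power2_eq_square)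
  qed
  obtain z where z: "0 < z" "z < 1" "\<phi> 1 - \<phi> 0 = (1 - 0) * \<phi>' z"
    using MVT2[of 0 1 \<phi> \<phi>'] der by auto
  have "gF (x + z *\<^sub>R d) \<bullet> d - gF x \<bullet> d \<le> norm (gF (x + z *\<^sub>R d) - gF x) * norm d"
    by (metis inner_diff_left norm_cauchy_schwarz)
  also have "\<dots> \<le> L * norm (z *\<^sub>R d) * norm d"
    using lip[of "x + z *\<^sub>R d" x] by (intro mult_right_mono) auto
  also have "\<dots> = L * z * (norm d)\<^sup>2"
    using z by (simp add: power2_eq_square)
  finally have "\<phi> 1 \<le> \<phi> 0"
    using z unfolding \<phi>'_def by simp
  then show ?thesis unfolding \<phi>_def d_def by simp
qed

lemma smooth_convex_three_point:
  fixes F :: "'a::real_inner \<Rightarrow> real"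
  assumes "convex_on UNIV F"
    and "\<And>x. (F has_derivative (\<lambda>h. gF x \<bullet> h)) (at x)"
    and "\<And>x y. norm (gF x - gF y) \<le> L * norm (x - y)"
  shows "F y - F z \<le> gF x \<bullet> (y - z) + L / 2 * (norm (y - x))\<^sup>2"
proof -
  have "F y \<le> F x + gF x \<bullet> (y - x) + L / 2 * (norm (y - x))\<^sup>2"
    using assms(2,3) by (rule lipschitz_gradient_descent)
  moreover have "F x + gF x \<bullet> (z - x) \<le> F z"
    using assms(1,2) by (rule convex_on_gradient_ineq)
  moreover have "gF x \<bullet> (y - z) = gF x \<bullet> (y - x) - gF x \<bullet> (z - x)"
    by (simp add: inner_diff_right)
  ultimately show ?thesis by linarith
qed

lemma stationary_step_distance_bound:
  fixes F :: "'a::real_inner \<Rightarrow> real"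
  assumes cvx: "convex_on UNIV F"
    and deriv: "\<And>x. (F has_derivative (\<lambda>h. gF x \<bullet> h)) (at x)"
    and lip: "\<And>x y. norm (gF x - gF y) \<le> L * norm (x - y)"
    and eta: "\<eta> > 0" and c: "\<eta> * L \<le> c"
    and stat: "v + u + (c / \<eta>) *\<^sub>R (x' - x) = 0"
  shows "c * (norm (x' - z))\<^sup>2 \<le> c * (norm (x - z))\<^sup>2 - 2 * \<eta> * (F x' - F z)
           - 2 * \<eta> * ((v - gF x) \<bullet> (x' - z)) + 2 * \<eta> * (u \<bullet> (z - x'))"
proof -
  define D where "D = (norm (x' - x))\<^sup>2"
  have expand: "(norm (x' - z))\<^sup>2 = (norm (x - z))\<^sup>2 - D + 2 * ((x' - x) \<bullet> (x' - z))"
    unfolding D_def power2_norm_eq_inner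
    by (simp add: algebra_simps inner_diff_left inner_diff_right inner_commute)
  have "(c / \<eta>) * ((x' - x) \<bullet> (x' - z)) = - ((v + u) \<bullet> (x' - z))"
    using arg_cong[OF stat, of "\<lambda>w. w \<bullet> (x' - z)"] by (simp add: inner_add_left)
  then have prox: "c * ((x' - x) \<bullet> (x' - z)) = - \<eta> * ((v + u) \<bullet> (x' - z))"
    using eta by (simp add: field_simps)
  have three_point: "F x' - F z \<le> gF x \<bullet> (x' - z) + L / 2 * D"
    unfolding D_def using cvx deriv lip by (rule smooth_convex_three_point)
  have Fbound: "2 * \<eta> * (F x' - F z) \<le> 2 * \<eta> * (gF x \<bullet> (x' - z)) + \<eta> * L * D"
    using mult_left_mono[OF three_point, of "2 * \<eta>"] eta by (simp add: algebra_simps)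
  have "c * (norm (x' - z))\<^sup>2 = c * (norm (x - z))\<^sup>2 - c * D + 2 * (c * ((x' - x) \<bullet> (x' - z)))"
    unfolding expand by (simp add: algebra_simps)
  also have "\<dots> = c * (norm (x - z))\<^sup>2 - c * D - 2 * \<eta> * ((v - gF x) \<bullet> (x' - z))
      - 2 * \<eta> * (gF x \<bullet> (x' - z)) + 2 * \<eta> * (u \<bullet> (z - x'))"
    unfolding prox by (simp add: inner_add_left inner_diff_left inner_diff_right algebra_simps)
  moreover have "(\<eta> * L) * D \<le> c * D"
    using c by (simp add: D_def mult_right_mono)
  ultimately show ?thesis
    using Fbound by linarith
qed

lemma prox_linearized_step_stationary:
  fixes A :: "real^'q^'p" and B :: "real^'l^'p"
  assumes "\<And>z. v \<bullet> (x' - x) + lk \<bullet> (A *v x') + \<rho> / 2 * (norm (A *v x' + B *v w))\<^sup>2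
                 + C * (norm (x' - x))\<^sup>2
               \<le> v \<bullet> (z - x) + lk \<bullet> (A *v z) + \<rho> / 2 * (norm (A *v z + B *v w))\<^sup>2
                 + C * (norm (z - x))\<^sup>2"
  shows "v + transpose A *v (lk + \<rho> *\<^sub>R (A *v x' + B *v w)) + (2 * C) *\<^sub>R (x' - x) = 0"
proof (rule gradient_zero_at_minimum)
  let ?G = "v + transpose A *v (lk + \<rho> *\<^sub>R (A *v x' + B *v w)) + (2 * C) *\<^sub>R (x' - x)"
  let ?D = "\<lambda>h. v \<bullet> h + lk \<bullet> (A *v h)
      + \<rho> / 2 * ((A *v h) \<bullet> (A *v x' + B *v w) + (A *v x' + B *v w) \<bullet> (A *v h))
      + C * (h \<bullet> (x' - x) + (x' - x) \<bullet> h)"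
  have lin: "((*v) A has_derivative (*v) A) (at y)" for y
    by (simp add: bounded_linear_imp_has_derivative matrix_vector_mul_bounded_linear)
  have "((\<lambda>z. v \<bullet> (z - x) + lk \<bullet> (A *v z) + \<rho> / 2 * ((A *v z + B *v w) \<bullet> (A *v z + B *v w))
                 + C * ((z - x) \<bullet> (z - x))) has_derivative ?D) (at x')"
    by (rule derivative_eq_intros lin refl | simp add: inner_commute)+
  moreover have "?D = (\<lambda>h. ?G \<bullet> h)"
    unfolding inner_add_left transpose_matrix_vector_inner
    by (simp add: inner_add_right algebra_simps inner_commute)
  ultimately show "((\<lambda>z. v \<bullet> (z - x) + lk \<bullet> (A *v z) + \<rho> / 2 * (norm (A *v z + B *v w))\<^sup>2
                 + C * (norm (z - x))\<^sup>2) has_derivative (\<lambda>h. ?G \<bullet> h)) (at x')"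
    by (simp add: power2_norm_eq_inner)
qed (use assms in blast)

lemma prox_linearized_step_distance_bound:
  fixes F :: "real^'q \<Rightarrow> real" and A :: "real^'q^'p" and B :: "real^'l^'p"
  assumes cvx: "convex_on UNIV F"
    and deriv: "\<And>x. (F has_derivative (\<lambda>h. gF x \<bullet> h)) (at x)"
    and lip: "\<And>x y. norm (gF x - gF y) \<le> L * norm (x - y)"
    and eta: "\<eta> > 0" and c: "\<eta> * L \<le> c"
    and min: "\<And>z. v \<bullet> (x' - x) + lk \<bullet> (A *v x') + \<rho> / 2 * (norm (A *v x' + B *v w))\<^sup>2
                 + 1 / (2 * \<eta>) * (c * (norm (x' - x))\<^sup>2)
               \<le> v \<bullet> (z - x) + lk \<bullet> (A *v z) + \<rho> / 2 * (norm (A *v z + B *v w))\<^sup>2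
                 + 1 / (2 * \<eta>) * (c * (norm (z - x))\<^sup>2)"
  shows "c * (norm (x' - x\<^sub>0))\<^sup>2 \<le> c * (norm (x - x\<^sub>0))\<^sup>2 - 2 * \<eta> * (F x' - F x\<^sub>0)
           - 2 * \<eta> * ((v - gF x) \<bullet> (x' - x\<^sub>0))
           + 2 * \<eta> * ((transpose A *v (lk + \<rho> *\<^sub>R (A *v x' + B *v w))) \<bullet> (x\<^sub>0 - x'))"
proof (rule stationary_step_distance_bound[OF cvx deriv lip eta c])
  have "v + transpose A *v (lk + \<rho> *\<^sub>R (A *v x' + B *v w)) + (2 * (1 / (2 * \<eta>) * c)) *\<^sub>R (x' - x) = 0"
    by (rule prox_linearized_step_stationary) (use min in \<open>simp only: mult.assoc\<close>)
  then show "v + transpose A *v (lk + \<rho> *\<^sub>R (A *v x' + B *v w)) + (c / \<eta>) *\<^sub>R (x' - x) = 0"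
    by simp
qed

lemma average_lipschitz:
  fixes T :: "nat \<Rightarrow> nat \<Rightarrow> 'a::real_normed_vector \<Rightarrow> 'b::real_normed_vector"
  assumes n: "n \<ge> 1" and m: "m \<ge> 1"
    and lip: "\<And>i j x y. i < n \<Longrightarrow> j < m \<Longrightarrow> norm (T i j x - T i j y) \<le> L * norm (x - y)"
  shows "norm ((1 / (real n * real m)) *\<^sub>R (\<Sum>i<n. \<Sum>j<m. T i j x)
           - (1 / (real n * real m)) *\<^sub>R (\<Sum>i<n. \<Sum>j<m. T i j y)) \<le> L * norm (x - y)"
proof -
  have "norm ((1 / (real n * real m)) *\<^sub>R (\<Sum>i<n. \<Sum>j<m. T i j x)
           - (1 / (real n * real m)) *\<^sub>R (\<Sum>i<n. \<Sum>j<m. T i j y))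
      = (1 / (real n * real m)) * norm (\<Sum>i<n. \<Sum>j<m. T i j x - T i j y)"
    by (simp add: sum_subtractf flip: scaleR_diff_right)
  also have "norm (\<Sum>i<n. \<Sum>j<m. T i j x - T i j y) \<le> (\<Sum>i<n. \<Sum>j<m. norm (T i j x - T i j y))"
    by (rule order_trans[OF norm_sum sum_mono]) (rule norm_sum)
  also have "\<dots> \<le> (\<Sum>i<n. \<Sum>j<m. L * norm (x - y))"
    by (intro sum_mono lip) auto
  also have "(1 / (real n * real m)) * \<dots> = L * norm (x - y)"
    using n m by simp
  finally show ?thesis
    by (simp add: divide_right_mono)
qed

lemma Fobj_gradient_eq:
  fixes g :: "nat \<Rightarrow> real^'q \<Rightarrow> real^'r" and Jg :: "nat \<Rightarrow> real^'q \<Rightarrow> real^'q^'r"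
  assumes g_deriv: "\<And>j x. j < m \<Longrightarrow> (g j has_derivative (\<lambda>h. Jg j x *v h)) (at x)"
    and f_deriv: "\<And>i y. i < n \<Longrightarrow> (f i has_derivative (\<lambda>h. gradf i y \<bullet> h)) (at y)"
    and F_grad: "(Fobj n m f g has_derivative (\<lambda>h. gradF \<bullet> h)) (at x)"
  shows "gradF = (1 / (real n * real m)) *\<^sub>R
     (\<Sum>i<n. \<Sum>j<m. transpose (Jg j x) *v gradf i (gavg m g x))"
proof -
  let ?G = "(1 / (real n * real m)) *\<^sub>R (\<Sum>i<n. \<Sum>j<m. transpose (Jg j x) *v gradf i (gavg m g x))"
  have dg: "(gavg m g has_derivative (\<lambda>h. (1 / real m) *\<^sub>R (\<Sum>j<m. Jg j x *v h))) (at x)"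
    unfolding gavg_def[abs_def]
    by (intro has_derivative_scaleR_right has_derivative_sum g_deriv) auto
  have "(\<lambda>h. gradF \<bullet> h)
      = (\<lambda>h. (1 / real n) * (\<Sum>i<n. gradf i (gavg m g x) \<bullet> ((1 / real m) *\<^sub>R (\<Sum>j<m. Jg j x *v h))))"
  proof (rule has_derivative_unique[OF F_grad])
    show "(Fobj n m f g has_derivative
      (\<lambda>h. (1 / real n) * (\<Sum>i<n. gradf i (gavg m g x) \<bullet> ((1 / real m) *\<^sub>R (\<Sum>j<m. Jg j x *v h)))))
      (at x)"
      unfolding Fobj_def[abs_def]
      by (intro has_derivative_mult_right has_derivative_sum has_derivative_compose[OF dg] f_deriv) auto
  qed
  also have "\<dots> = (\<lambda>h. ?G \<bullet> h)"
    unfolding inner_scaleR_left inner_sum_left transpose_matrix_vector_inner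
    by (simp add: inner_sum_right sum_distrib_left)
  finally show ?thesis
    by (metis vector_eq_rdot)
qed

lemma Fobj_gradient_lipschitz:
  fixes g :: "nat \<Rightarrow> real^'q \<Rightarrow> real^'r" and Jg :: "nat \<Rightarrow> real^'q \<Rightarrow> real^'q^'r"
  assumes n: "n \<ge> 1" and m: "m \<ge> 1"
    and g_deriv: "\<And>j x. j < m \<Longrightarrow> (g j has_derivative (\<lambda>h. Jg j x *v h)) (at x)"
    and f_deriv: "\<And>i y. i < n \<Longrightarrow> (f i has_derivative (\<lambda>h. gradf i y \<bullet> h)) (at y)"
    and F_grad: "\<And>x. (Fobj n m f g has_derivative (\<lambda>h. gradF x \<bullet> h)) (at x)"
    and lip: "\<And>i j x y. i < n \<Longrightarrow> j < m \<Longrightarrow>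
       norm (transpose (Jg j x) *v gradf i (gavg m g x) - transpose (Jg j y) *v gradf i (gavg m g y))
         \<le> L * norm (x - y)"
  shows "norm (gradF x - gradF y) \<le> L * norm (x - y)"
proof -
  let ?T = "\<lambda>i j x. transpose (Jg j x) *v gradf i (gavg m g x)"
  have "norm ((1 / (real n * real m)) *\<^sub>R (\<Sum>i<n. \<Sum>j<m. ?T i j x)
         - (1 / (real n * real m)) *\<^sub>R (\<Sum>i<n. \<Sum>j<m. ?T i j y)) \<le> L * norm (x - y)"
    by (rule average_lipschitz[OF n m]) (rule lip)
  then show ?thesis
    by (simp only: Fobj_gradient_eq[OF g_deriv f_deriv F_grad])
qed

lemma convex_on_Fobj:
  assumes "\<And>i. i < n \<Longrightarrow> convex_on UNIV (\<lambda>x. f i (gavg m g x))"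
  shows "convex_on UNIV (Fobj n m f g)"
  unfolding Fobj_def[abs_def] using assms
  by (intro convex_on_cmul convex_on_sum_fun) auto

theorem lemma8:
  fixes n m :: nat
    and g :: "nat \<Rightarrow> real^'q \<Rightarrow> real^'r"
    and Jg :: "nat \<Rightarrow> real^'q \<Rightarrow> real^'q^'r"
    and f :: "nat \<Rightarrow> real^'r \<Rightarrow> real"
    and gradf :: "nat \<Rightarrow> real^'r \<Rightarrow> real^'r"
    and gradF :: "real^'q \<Rightarrow> real^'q"
    and R :: "real^'l \<Rightarrow> real"
    and A :: "real^'q^'p" and B :: "real^'l^'p"
    and xs :: "real^'q" and ws :: "real^'l" and ls :: "real^'p"
    and LF \<rho> :: real
    and s K k :: nat
    and cs :: "nat \<Rightarrow> real" and Gs :: "nat \<Rightarrow> real^'q^'q"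
    and xt xk :: "real^'q" and lk :: "real^'p" and w1 :: "real^'l"
    and xn :: "nat \<Rightarrow> nat \<Rightarrow> real^'q"
  assumes n_pos: "n \<ge> 1" and m_pos: "m \<ge> 1"
    \<comment> \<open>smoothness: g_j continuously differentiable with Jacobian Jg j\<close>
    and g_deriv: "\<And>j x. j < m \<Longrightarrow> (g j has_derivative (\<lambda>h. Jg j x *v h)) (at x)"
    and Jg_cont: "\<And>j. j < m \<Longrightarrow> continuous_on UNIV (Jg j)"
    \<comment> \<open>f_i continuously differentiable with gradient gradf i\<close>
    and f_deriv: "\<And>i y. i < n \<Longrightarrow> (f i has_derivative (\<lambda>h. gradf i y \<bullet> h)) (at y)"
    and gradf_cont: "\<And>i. i < n \<Longrightarrow> continuous_on UNIV (gradf i)"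
    \<comment> \<open>gradF is the gradient of F\<close>
    and F_grad: "\<And>x. (Fobj n m f g has_derivative (\<lambda>h. gradF x \<bullet> h)) (at x)"
    \<comment> \<open>(A1)\<close>
    and F_i_convex: "\<And>i. i < n \<Longrightarrow> convex_on UNIV (\<lambda>x. f i (gavg m g x))"
    and R_convex: "convex_on UNIV R"
    and opt: "primal_dual_opt (Fobj n m f g) R A B xs ws ls"
    \<comment> \<open>(A4)\<close>
    and LF_pos: "LF > 0"
    and A4: "\<And>i j x y. i < n \<Longrightarrow> j < m \<Longrightarrow>
       norm (transpose (Jg j x) *v gradf i (gavg m g x) - transpose (Jg j y) *v gradf i (gavg m g y))
         \<le> LF * norm (x - y)"
    \<comment> \<open>Algorithm 2 parameters, parameter choice (P1), stage s, inner iteration k\<close>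
    and rho_pos: "\<rho> > 0"
    and s_pos: "s \<ge> 1" and K_pos: "K \<ge> 1" and k_lt: "k < K"
    and Gs_def: "\<And>t. t \<le> K \<Longrightarrow> Gs t = cs t *\<^sub>R mat 1"
    and cs_0: "cs 0 = 1 / real s"
    and cs_mono: "\<And>t. t < K \<Longrightarrow> cs (Suc t) \<le> cs t"
    and cs_last: "cs (K - 1) = 1 / real (s + 1)" "cs K = 1 / real (s + 1)"
    \<comment> \<open>step (a): w1 = omega^{k+1}\<close>
    and step_a: "\<And>w. R w1 + lk \<bullet> (B *v w1) + \<rho> / 2 * (norm (A *v xk + B *v w1))\<^sup>2
                   \<le> R w + lk \<bullet> (B *v w) + \<rho> / 2 * (norm (A *v xk + B *v w))\<^sup>2"
    \<comment> \<open>step (d): xn i j = x^{k+1} when (i_k, j_k) = (i, j), with eta_s = 1/((s+1) LF)\<close>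
    and step_d: "\<And>i j x. i < n \<Longrightarrow> j < m \<Longrightarrow>
       (let v = transpose (Jg j xk) *v gradf i (gavg m g xk)
                - transpose (Jg j xt) *v gradf i (gavg m g xt) + gradF xt;
            \<eta> = 1 / (real (s + 1) * LF)
        in v \<bullet> (xn i j - xk) + lk \<bullet> (A *v xn i j) + \<rho> / 2 * (norm (A *v xn i j + B *v w1))\<^sup>2
             + 1 / (2 * \<eta>) * wnorm2 (Gs k) (xn i j - xk)
           \<le> v \<bullet> (x - xk) + lk \<bullet> (A *v x) + \<rho> / 2 * (norm (A *v x + B *v w1))\<^sup>2
             + 1 / (2 * \<eta>) * wnorm2 (Gs k) (x - xk))"
    \<comment> \<open>(A1): all x-points arising lie in a bounded set\<close>
    and bdd: "\<exists>X. bounded X \<and> xk \<in> X \<and> xt \<in> X \<and> (\<forall>i<n. \<forall>j<m. xn i j \<in> X)"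
  shows
    "(let \<eta> = 1 / (real (s + 1) * LF);
          vhat = (\<lambda>i j. transpose (Jg j xk) *v gradf i (gavg m g xk)
                - transpose (Jg j xt) *v gradf i (gavg m g xt) + gradF xt);
          ln = (\<lambda>i j. lk + \<rho> *\<^sub>R (A *v xn i j + B *v w1));
          F = Fobj n m f g
      in Esamp n m (\<lambda>i j. wnorm2 (Gs k) (xn i j - xs))
         \<le> Esamp n m (\<lambda>i j. wnorm2 (Gs k) (xk - xs))
           - 2 * \<eta> * Esamp n m (\<lambda>i j. F (xn i j) - F xs)
           - 2 * \<eta> * Esamp n m (\<lambda>i j. (vhat i j - gradF xk) \<bullet> (xn i j - xs))
           + 2 * \<eta> * Esamp n m (\<lambda>i j. (transpose A *v ln i j) \<bullet> (xs - xn i j)))"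
proof -
  define \<eta> where "\<eta> = 1 / (real (s + 1) * LF)"
  define c where "c = cs k"
  have lip: "\<And>x y. norm (gradF x - gradF y) \<le> LF * norm (x - y)"
    by (rule Fobj_gradient_lipschitz[OF n_pos m_pos g_deriv f_deriv F_grad A4])
  have cvx: "convex_on UNIV (Fobj n m f g)"
    using F_i_convex by (rule convex_on_Fobj)
  have eta_pos: "\<eta> > 0"
    using LF_pos by (simp add: \<eta>_def)
  have "\<eta> * LF = cs K"
    using LF_pos cs_last(2) by (simp add: \<eta>_def)
  also have "cs K \<le> c"
    unfolding c_def by (rule lift_Suc_antimono_le_ivl[of "{..<K}"]) (use cs_mono k_lt in auto)
  finally have c_ge: "\<eta> * LF \<le> c" .
  have Gk: "Gs k = c *\<^sub>R mat 1"
    using Gs_def k_lt by (simp add: c_def)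
  have sample: "c * (norm (xn i j - xs))\<^sup>2 \<le> c * (norm (xk - xs))\<^sup>2
      - 2 * \<eta> * (Fobj n m f g (xn i j) - Fobj n m f g xs)
      - 2 * \<eta> * ((transpose (Jg j xk) *v gradf i (gavg m g xk)
                    - transpose (Jg j xt) *v gradf i (gavg m g xt) + gradF xt - gradF xk)
                   \<bullet> (xn i j - xs))
      + 2 * \<eta> * ((transpose A *v (lk + \<rho> *\<^sub>R (A *v xn i j + B *v w1))) \<bullet> (xs - xn i j))"
    if "i < n" "j < m" for i j
    using step_d[OF that] unfolding Let_def Gk wnorm2_scaleR_mat1 \<eta>_def[symmetric]
    by (rule prox_linearized_step_distance_bound[OF cvx F_grad lip eta_pos c_ge])
  show ?thesis
    using Esamp_mono[OF sample]
    unfolding Let_def \<eta>_def[symmetric] Gk wnorm2_scaleR_mat1 Esamp_add Esamp_diff Esamp_cmult .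
qed

end
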